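(* Let $p,q,r$ be CPC patterns and $\rho,\vartheta,\theta$ substitutions. If $p,{\sf id}_{{\sf bn}(p)}\sqsubseteq q,\rho$ and $\{p\,\|\,r\}=(\vartheta,\theta)$, then $\{q\,\|\,r\}=(\vartheta[\rho],\theta)$.
   Context: CPC patterns over a countable set of names: $p ::= \lambda x \mid x \mid \ulcorner x\urcorner \mid p\bullet p$ (binding name, variable name, protected name, compound). ${\sf bn}(p)$, ${\sf vn}(p)$, ${\sf pn}(p)$ are the sets of binding, variable and protected names of $p$; ${\sf fn}(p)={\sf vn}(p)\cup{\sf pn}(p)$. Patterns are well formed (binding names pairwise distinct and distinct from free names). Communicable patterns contain no protected or binding names; protection extends to them by $\ulcorner p\bullet q\urcorner=\ulcorner p\urcorner\bullet\ulcorner q\urcorner$. A substitution is a finite partial function from names to communicable patterns, applied to patterns by $\sigma x=\sigma(x)$ if $x\in{\sf dom}(\sigma)$ else $x$; $\sigma\ulcorner x\urcorner=\ulcorner\sigma(x)\urcorner$ if $x\in{\sf dom}(\sigma)$ else $\ulcorner x\urcorner$; $\sigma(\lambda x)=\lambda x$; $\sigma(p\bullet q)=\sigma p\bullet\sigma q$. ${\sf id}_X$ is the identity substitution on a finite set $X$. $\hat\sigma$ acts by $\hat\sigma x=x$, $\hat\sigma\ulcorner x\urcorner=\ulcorner x\urcorner$, $\hat\sigma(\lambda x)=\sigma(x)$ if $x\in{\sf dom}(\sigma)$ else $\lambda x$, $\hat\sigma(p\bullet q)=\hat\sigma p\bullet\hat\sigma q$. For substitutions $\vartheta,\rho$, $\vartheta[\rho]$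 is the substitution with domain ${\sf dom}(\rho)$ mapping each $x$ to $\vartheta(\rho(x))$. Unification $\{p\,\|\,q\}$ is a pair of substitutions or undefined: $\{x\|x\}=\{x\|\ulcorner x\urcorner\}=\{\ulcorner x\urcorner\|x\}=\{\ulcorner x\urcorner\|\ulcorner x\urcorner\}=(\{\},\{\})$; $\{\lambda x\|q\}=(\{q/x\},\{\})$ if $q$ is communicable; $\{p\|\lambda x\}=(\{\},\{p/x\})$ if $p$ is communicable; $\{p_1\bullet p_2\|q_1\bullet q_2\}=(\sigma_1\cup\sigma_2,\rho_1\cup\rho_2)$ if $\{p_i\|q_i\}=(\sigma_i,\rho_i)$ for $i=1,2$; undefined otherwise. A match $(p,\sigma)$ is a pattern $p$ and substitution $\sigma$ with ${\sf dom}(\sigma)={\sf bn}(p)$. Compatibility $p,\sigma\sqsubseteq q,\rho$ is the least relation between matches with: $p,\sigma\sqsubseteq\lambda y,\{\hat\sigma p/y\}$ if ${\sf fn}(p)=\emptyset$; $n,\{\}\sqsubseteq n,\{\}$; $\ulcorner n\urcorner,\{\}\sqsubseteq\ulcorner n\urcorner,\{\}$; $\ulcorner n\urcorner,\{\}\sqsubseteq n,\{\}$; $p_1\bullet p_2,\sigma_1\cup\sigma_2\sqsubseteq q_1\bullet q_2,\rho_1\cup\rho_2$ if $p_i,\sigma_i\sqsubseteq q_i,\rho_i$ for $i=1,2$. *)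

theory Defs
  imports Main
begin

datatype 'n pat = Bind 'n | Var 'n | Prot 'n | Comp "'n pat" "'n pat"

fun bnl :: "'n pat \<Rightarrow> 'n list" where
  "bnl (Bind x) = [x]"
| "bnl (Var x) = []"
| "bnl (Prot x) = []"
| "bnl (Comp p q) = bnl p @ bnl q"

definition bn :: "'n pat \<Rightarrow> 'n set" where "bn p = set (bnl p)"

fun vn :: "'n pat \<Rightarrow> 'n set" where
  "vn (Bind x) = {}"
| "vn (Var x) = {x}"
| "vn (Prot x) = {}"
| "vn (Comp p q) = vn p \<union> vn q"

fun pn :: "'n pat \<Rightarrow> 'n set" where
  "pn (Bind x) = {}"
| "pn (Var x) = {}"
| "pn (Prot x) = {x}"
| "pn (Comp p q) = pn p \<union> pn q"

definition fn :: "'n pat \<Rightarrow> 'n set" where "fn p = vn p \<union> pn p"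

definition wf_pat :: "'n pat \<Rightarrow> bool" where
  "wf_pat p \<longleftrightarrow> distinct (bnl p) \<and> bn p \<inter> fn p = {}"

fun communicable :: "'n pat \<Rightarrow> bool" where
  "communicable (Bind x) = False"
| "communicable (Var x) = True"
| "communicable (Prot x) = False"
| "communicable (Comp p q) = (communicable p \<and> communicable q)"

text \<open>Protection of a communicable pattern (identity on other shapes, never used there).\<close>
fun protect :: "'n pat \<Rightarrow> 'n pat" where
  "protect (Var x) = Prot x"
| "protect (Comp p q) = Comp (protect p) (protect q)"
| "protect p = p"

type_synonym 'n subst = "'n \<rightharpoonup> 'n pat"

definition is_subst :: "'n subst \<Rightarrow> bool" where
  "is_subst \<sigma> \<longleftrightarrow> finite (dom \<sigma>) \<and> (\<forall>t\<in>ran \<sigma>. communicable t)"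

fun app_subst :: "'n subst \<Rightarrow> 'n pat \<Rightarrow> 'n pat" where
  "app_subst \<sigma> (Var x) = (case \<sigma> x of Some t \<Rightarrow> t | None \<Rightarrow> Var x)"
| "app_subst \<sigma> (Prot x) = (case \<sigma> x of Some t \<Rightarrow> protect t | None \<Rightarrow> Prot x)"
| "app_subst \<sigma> (Bind x) = Bind x"
| "app_subst \<sigma> (Comp p q) = Comp (app_subst \<sigma> p) (app_subst \<sigma> q)"

fun hat_subst :: "'n subst \<Rightarrow> 'n pat \<Rightarrow> 'n pat" where
  "hat_subst \<sigma> (Var x) = Var x"
| "hat_subst \<sigma> (Prot x) = Prot x"
| "hat_subst \<sigma> (Bind x) = (case \<sigma> x of Some t \<Rightarrow> t | None \<Rightarrow> Bind x)"
| "hat_subst \<sigma> (Comp p q) = Comp (hat_subst \<sigma> p) (hat_subst \<sigma> q)"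

definition id_on :: "'n set \<Rightarrow> 'n subst" where
  "id_on X = (\<lambda>x. if x \<in> X then Some (Var x) else None)"

text \<open>\<open>\<phi>[\<rho>]\<close>: domain dom \<rho>, x maps to \<phi>(\<rho>(x)).\<close>
definition subst_comp :: "'n subst \<Rightarrow> 'n subst \<Rightarrow> 'n subst" where
  "subst_comp \<phi> \<rho> = (\<lambda>x. map_option (app_subst \<phi>) (\<rho> x))"

text \<open>Unification; union of substitutions is map union (domains are disjoint
  for well formed patterns).\<close>
fun unify :: "'n pat \<Rightarrow> 'n pat \<Rightarrow> ('n subst \<times> 'n subst) option" where
  "unify (Bind x) q = (if communicable q then Some ([x \<mapsto> q], Map.empty) else None)"
| "unify p (Bind y) = (if communicable p then Some (Map.empty, [y \<mapsto> p]) else None)"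
| "unify (Var x) (Var y) = (if x = y then Some (Map.empty, Map.empty) else None)"
| "unify (Var x) (Prot y) = (if x = y then Some (Map.empty, Map.empty) else None)"
| "unify (Prot x) (Var y) = (if x = y then Some (Map.empty, Map.empty) else None)"
| "unify (Prot x) (Prot y) = (if x = y then Some (Map.empty, Map.empty) else None)"
| "unify (Comp p1 p2) (Comp q1 q2) =
     (case (unify p1 q1, unify p2 q2) of
        (Some (s1, r1), Some (s2, r2)) \<Rightarrow> Some (s1 ++ s2, r1 ++ r2)
      | _ \<Rightarrow> None)"
| "unify _ _ = None"

inductive compat :: "'n pat \<Rightarrow> 'n subst \<Rightarrow> 'n pat \<Rightarrow> 'n subst \<Rightarrow> bool" where
  bind: "\<lbrakk>dom \<sigma> = bn p; is_subst \<sigma>; fn p = {}\<rbrakk>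
         \<Longrightarrow> compat p \<sigma> (Bind y) [y \<mapsto> hat_subst \<sigma> p]"
| var: "compat (Var n) Map.empty (Var n) Map.empty"
| prot: "compat (Prot n) Map.empty (Prot n) Map.empty"
| prot_var: "compat (Prot n) Map.empty (Var n) Map.empty"
| comp: "\<lbrakk>compat p1 \<sigma>1 q1 \<rho>1; compat p2 \<sigma>2 q2 \<rho>2\<rbrakk>
         \<Longrightarrow> compat (Comp p1 p2) (\<sigma>1 ++ \<sigma>2) (Comp q1 q2) (\<rho>1 ++ \<rho>2)"

end

theory Submission
  imports Defs
begin

text \<open>
  The images of \<open>\<rho>\<close> only mention binding
  names of \<open>p\<close>, which are exactly the names the unifier \<open>\<vartheta>\<close> of \<open>p\<close> and \<open>r\<close> defines; so in
  the compound case the two halves of \<open>\<vartheta>\<close> act independently on the two halves of \<open>\<rho>\<close>.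
  In the base case \<open>q = \<lambda>y\<close> the pattern \<open>p\<close> has no free names, hence its unification with
  \<open>r\<close> succeeds only for communicable \<open>r\<close> and then \<open>\<vartheta>\<close> applied to \<open>p\<close> (binders read as
  variables) gives back \<open>r\<close>; this is precisely \<open>\<vartheta>[\<rho>](y)\<close>.
\<close>

lemma wf_pat_Comp:
  "wf_pat (Comp p q) \<Longrightarrow> wf_pat p \<and> wf_pat q \<and> bn p \<inter> bn q = {}"
  by (auto simp: wf_pat_def bn_def fn_def)

lemma bn_Comp [simp]: "bn (Comp p q) = bn p \<union> bn q"
  by (simp add: bn_def)

lemma fn_Comp [simp]: "fn (Comp p q) = fn p \<union> fn q"
  by (auto simp: fn_def)

lemma communicable_fn_nonempty: "communicable p \<Longrightarrow> fn p \<noteq> {}"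
  by (induction p) (auto simp: fn_def)

lemma communicable_bnl_Nil: "communicable p \<Longrightarrow> bnl p = []"
  by (induction p) auto

lemma app_subst_cong: "(\<And>v. v \<in> fn t \<Longrightarrow> \<sigma> v = \<sigma>' v) \<Longrightarrow> app_subst \<sigma> t = app_subst \<sigma>' t"
  by (induction t) (auto simp: fn_def)

lemma app_subst_map_add_left:
  "fn t \<inter> dom \<sigma>' = {} \<Longrightarrow> app_subst (\<sigma> ++ \<sigma>') t = app_subst \<sigma> t"
  by (rule app_subst_cong) (auto simp: map_add_def split: option.splits)

lemma app_subst_map_add_right:
  "fn t \<subseteq> dom \<sigma>' \<Longrightarrow> app_subst (\<sigma> ++ \<sigma>') t = app_subst \<sigma>' t"
  by (rule app_subst_cong) (auto simp: map_add_dom_app_simps(1))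

lemma subst_comp_cong:
  assumes "\<And>t. t \<in> ran \<rho> \<Longrightarrow> app_subst \<phi> t = app_subst \<phi>' t"
  shows "subst_comp \<phi> \<rho> = subst_comp \<phi>' \<rho>"
  unfolding subst_comp_def fun_eq_iff
  by (metis assms option.map_cong0 option.set_cases ranI)

lemma subst_comp_map_add: "subst_comp \<phi> (\<rho>1 ++ \<rho>2) = subst_comp \<phi> \<rho>1 ++ subst_comp \<phi> \<rho>2"
  by (auto simp: subst_comp_def map_add_def fun_eq_iff split: option.splits)

lemma map_add_eq_id_on:
  assumes "dom \<sigma>1 = A" "dom \<sigma>2 = B" "A \<inter> B = {}" "\<sigma>1 ++ \<sigma>2 = id_on (A \<union> B)"
  shows "\<sigma>1 = id_on A" "\<sigma>2 = id_on B"
proof -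
  have "\<sigma>1 x = (\<sigma>1 ++ \<sigma>2) x" if "x \<in> A" for x
    using that assms(2,3) by (auto simp: map_add_def split: option.splits)
  then show "\<sigma>1 = id_on A"
    using assms(1,4) by (auto simp: fun_eq_iff id_on_def)
  have "\<sigma>2 x = (\<sigma>1 ++ \<sigma>2) x" if "x \<in> B" for x
    using that assms(2) by (auto simp: map_add_dom_app_simps(1))
  then show "\<sigma>2 = id_on B"
    using assms(2,4) by (auto simp: fun_eq_iff id_on_def)
qed

lemma unify_Comp_Comp_eq_Some:
  "unify (Comp p1 p2) (Comp r1 r2) = Some (\<phi>, \<theta>) \<longleftrightarrow>
   (\<exists>\<phi>1 \<theta>1 \<phi>2 \<theta>2. unify p1 r1 = Some (\<phi>1, \<theta>1) \<and> unify p2 r2 = Some (\<phi>2, \<theta>2) \<and>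
      \<phi> = \<phi>1 ++ \<phi>2 \<and> \<theta> = \<theta>1 ++ \<theta>2)"
  by (auto split: option.splits)

lemma dom_unify_fst: "unify p r = Some (\<phi>, \<theta>) \<Longrightarrow> dom \<phi> = bn p"
proof (induction p r arbitrary: \<phi> \<theta> rule: unify.induct)
  case (7 p1 p2 q1 q2)
  then obtain \<phi>1 \<theta>1 \<phi>2 \<theta>2 where "unify p1 q1 = Some (\<phi>1, \<theta>1)"
    "unify p2 q2 = Some (\<phi>2, \<theta>2)" "\<phi> = \<phi>1 ++ \<phi>2"
    unfolding unify_Comp_Comp_eq_Some by blast
  with "7.IH" show ?case by (simp add: dom_map_add Un_commute)
qed (auto simp: bn_def communicable_bnl_Nil split: if_splits)

lemma compat_dom: "compat p \<sigma> q \<rho> \<Longrightarrow> dom \<sigma> = bn p"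
  by (induction rule: compat.induct) (auto simp: bn_def)

lemma compat_communicable: "compat p \<sigma> q \<rho> \<Longrightarrow> communicable p \<Longrightarrow> q = p \<and> \<rho> = Map.empty"
  by (induction rule: compat.induct) (auto dest: communicable_fn_nonempty)

lemma fn_hat_subst_id_on: "fn p = {} \<Longrightarrow> fn (hat_subst (id_on X) p) \<subseteq> bn p"
  by (induction p) (auto simp: fn_def bn_def id_on_def)

lemma unify_closed_pattern:
  assumes "fn p = {}" "wf_pat p" "bn p \<subseteq> X" "unify p r = Some (\<phi>, \<theta>)"
  shows "communicable r \<and> \<theta> = Map.empty \<and> app_subst \<phi> (hat_subst (id_on X) p) = r"
  using assms
proof (induction p arbitrary: r \<phi> \<theta>)
  case (Bind x)
  then show ?case by (auto simp: id_on_def bn_def split: if_splits)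
next
  case (Comp p1 p2)
  have p12: "wf_pat p1" "wf_pat p2" "bn p1 \<inter> bn p2 = {}" "fn p1 = {}" "fn p2 = {}"
    using wf_pat_Comp[OF Comp.prems(2)] Comp.prems(1) by auto
  have "\<not> communicable (Comp p1 p2)"
    using communicable_fn_nonempty Comp.prems(1) by blast
  with Comp.prems(4) obtain r1 r2 where r: "r = Comp r1 r2"
    by (cases r) (auto split: if_splits)
  from Comp.prems(4) obtain \<phi>1 \<theta>1 \<phi>2 \<theta>2
    where u1: "unify p1 r1 = Some (\<phi>1, \<theta>1)" and u2: "unify p2 r2 = Some (\<phi>2, \<theta>2)"
      and \<phi>\<theta>: "\<phi> = \<phi>1 ++ \<phi>2" "\<theta> = \<theta>1 ++ \<theta>2"
    unfolding r unify_Comp_Comp_eq_Some by blast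
  note hat_fn = fn_hat_subst_id_on[of _ X] and dom_\<phi>2 = dom_unify_fst[OF u2]
  have "app_subst (\<phi>1 ++ \<phi>2) (hat_subst (id_on X) p1) = app_subst \<phi>1 (hat_subst (id_on X) p1)"
    using hat_fn[OF p12(4)] dom_\<phi>2 p12(3) by (intro app_subst_map_add_left) blast
  moreover have "app_subst (\<phi>1 ++ \<phi>2) (hat_subst (id_on X) p2) = app_subst \<phi>2 (hat_subst (id_on X) p2)"
    using hat_fn[OF p12(5)] dom_\<phi>2 by (intro app_subst_map_add_right) blast
  ultimately show ?case
    using Comp.IH(1)[OF p12(4,1) _ u1] Comp.IH(2)[OF p12(5,2) _ u2] Comp.prems(3) r \<phi>\<theta>
    by auto
qed (auto simp: fn_def)

lemma compat_id_on_ran_fn: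
  assumes "compat p \<sigma> q \<rho>" "\<sigma> = id_on (bn p)" "wf_pat p" "t \<in> ran \<rho>"
  shows "fn t \<subseteq> bn p"
  using assms
proof (induction arbitrary: t rule: compat.induct)
  case (bind \<sigma> p y)
  then show ?case using fn_hat_subst_id_on by (auto simp: ran_def split: if_splits)
next
  case (comp p1 \<sigma>1 q1 \<rho>1 p2 \<sigma>2 q2 \<rho>2)
  have p12: "wf_pat p1" "wf_pat p2" "bn p1 \<inter> bn p2 = {}"
    using wf_pat_Comp[OF comp.prems(2)] by auto
  note \<sigma>12 = map_add_eq_id_on[OF compat_dom[OF comp.hyps(1)] compat_dom[OF comp.hyps(2)] p12(3)]
  have "t \<in> ran \<rho>1 \<or> t \<in> ran \<rho>2"
    using comp.prems(3) by (auto simp: ran_def map_add_def split: option.splits)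
  then show ?case
    using comp.IH(1)[OF _ p12(1)] comp.IH(2)[OF _ p12(2)] \<sigma>12 comp.prems(1) by fastforce
qed (auto simp: bn_def id_on_def)

lemma compat_id_on_unify:
  assumes "compat p \<sigma> q \<rho>" "\<sigma> = id_on (bn p)" "wf_pat p" "unify p r = Some (\<phi>, \<theta>)"
  shows "unify q r = Some (subst_comp \<phi> \<rho>, \<theta>)"
  using assms
proof (induction arbitrary: r \<phi> \<theta> rule: compat.induct)
  case (bind \<sigma> p y)
  then show ?case
    using unify_closed_pattern[OF bind(3,5) _ bind(6), of "bn p"]
    unfolding bind(4) by (auto simp: subst_comp_def fun_eq_iff)
next
  case (comp p1 \<sigma>1 q1 \<rho>1 p2 \<sigma>2 q2 \<rho>2)
  have p12: "wf_pat p1" "wf_pat p2" "bn p1 \<inter> bn p2 = {}"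
    using wf_pat_Comp[OF comp.prems(2)] by auto
  note \<sigma>12 = map_add_eq_id_on[OF compat_dom[OF comp.hyps(1)] compat_dom[OF comp.hyps(2)] p12(3)]
  have \<sigma>1: "\<sigma>1 = id_on (bn p1)" and \<sigma>2: "\<sigma>2 = id_on (bn p2)"
    using \<sigma>12 comp.prems(1) by auto
  show ?case
  proof (cases "communicable (Comp p1 p2)")
    case True
    have "Comp q1 q2 = Comp p1 p2" "\<rho>1 ++ \<rho>2 = Map.empty"
      using compat_communicable[OF compat.comp[OF comp.hyps] True] by auto
    moreover have "\<phi> = Map.empty"
      using True comp.prems(3) dom_unify_fst[of "Comp p1 p2"]
      by (simp add: bn_def communicable_bnl_Nil del: unify.simps)
    ultimately show ?thesis
      using comp.prems(3) by (simp add: subst_comp_def)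
  next
    case False
    with comp.prems(3) obtain r1 r2 where r: "r = Comp r1 r2"
      by (cases r) (auto split: if_splits)
    from comp.prems(3) obtain \<phi>1 \<theta>1 \<phi>2 \<theta>2
      where u1: "unify p1 r1 = Some (\<phi>1, \<theta>1)" and u2: "unify p2 r2 = Some (\<phi>2, \<theta>2)"
        and \<phi>\<theta>: "\<phi> = \<phi>1 ++ \<phi>2" "\<theta> = \<theta>1 ++ \<theta>2"
      unfolding r unify_Comp_Comp_eq_Some by blast
    note ran1 = compat_id_on_ran_fn[OF comp.hyps(1) \<sigma>1 p12(1)]
    note ran2 = compat_id_on_ran_fn[OF comp.hyps(2) \<sigma>2 p12(2)]
    note dom_\<phi>2 = dom_unify_fst[OF u2]
    have "subst_comp (\<phi>1 ++ \<phi>2) \<rho>1 = subst_comp \<phi>1 \<rho>1"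
      using ran1 dom_\<phi>2 p12(3) by (intro subst_comp_cong app_subst_map_add_left) blast
    moreover have "subst_comp (\<phi>1 ++ \<phi>2) \<rho>2 = subst_comp \<phi>2 \<rho>2"
      using ran2 dom_\<phi>2 by (intro subst_comp_cong app_subst_map_add_right) blast
    ultimately show ?thesis
      using comp.IH(1)[OF \<sigma>1 p12(1) u1] comp.IH(2)[OF \<sigma>2 p12(2) u2] r \<phi>\<theta>
      by (simp add: subst_comp_map_add)
  qed
qed (auto simp: subst_comp_def bn_def id_on_def elim!: unify.elims split: if_splits)

theorem proposition3p21:
  fixes p q r :: "'n pat" and \<rho> \<phi> \<theta> :: "'n subst"
  assumes "wf_pat p" and "wf_pat q" and "wf_pat r"
    and "is_subst \<rho>" and "is_subst \<phi>" and "is_subst \<theta>"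
    and "compat p (id_on (bn p)) q \<rho>"
    and "unify p r = Some (\<phi>, \<theta>)"
  shows "unify q r = Some (subst_comp \<phi> \<rho>, \<theta>)"
  using compat_id_on_unify[OF assms(7) refl assms(1,8)] .

end
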